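(* Let $H = \{h_0 = 0_H, h_1, \dots, h_{t-1}\}$ be a finite abelian group with a fixed enumeration of its elements, and let $\boldsymbol{\lambda} = (\lambda_0,\dots,\lambda_{t-1})$ be a sequence of nonnegative integers. Suppose that every non-zero sum subset of type $\boldsymbol{\lambda}$ of $(\mathbb{Z} \times H) \setminus \{0_{\mathbb{Z}\times H}\}$ is sequenceable. Then for every $n \geq 2$, every non-zero sum subset of type $\boldsymbol{\lambda}$ of $(\mathbb{Z}^n \times H) \setminus \{0_{\mathbb{Z}^n\times H}\}$ is sequenceable.
   Context: For a finite subset $S$ of an abelian group with $|S| = k$, an ordering $(x_1,\dots,x_k)$ of $S$ has partial sums $(y_0,\dots,y_k)$ with $y_0 = 0$, $y_i = x_1+\cdots+x_i$. It is a sequencing if the $y_i$ are pairwise distinct, and a rotational sequencing if they are pairwise distinct except that $y_k = y_0 = 0$; $S$ is sequenceable if it has one or the other. $S$ is non-zero sum if the sum of its elements is nonzero. For an abelian group $G$ and a finite abelian group $H = \{h_0=0_H,\dots,h_{t-1}\}$, the type of a finite subset $S \subseteq G \times H$ is $(\lambda_0,\dots,\lambda_{t-1})$ where $\lambda_i$ is the number of elements of $S$ whose $H$-coordinate equals $h_i$. *)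

theory Defs
  imports "HOL-Analysis.Analysis"
begin

definition partial_sum :: "'g::monoid_add list \<Rightarrow> nat \<Rightarrow> 'g" where
  "partial_sum xs i = sum_list (take i xs)"

definition is_sequencing :: "'g::monoid_add list \<Rightarrow> bool" where
  "is_sequencing xs \<longleftrightarrow> inj_on (partial_sum xs) {0..length xs}"

definition is_rotational_sequencing :: "'g::monoid_add list \<Rightarrow> bool" where
  "is_rotational_sequencing xs \<longleftrightarrow>
     inj_on (partial_sum xs) {0..<length xs} \<and> partial_sum xs (length xs) = 0"

definition sequenceable :: "'g::monoid_add set \<Rightarrow> bool" where
  "sequenceable S \<longleftrightarrow> finite S \<and>
     (\<exists>xs. distinct xs \<and> set xs = S \<and> (is_sequencing xs \<or> is_rotational_sequencing xs))"

definition nonzero_sum :: "'g::comm_monoid_add set \<Rightarrow> bool" where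
  "nonzero_sum S \<longleftrightarrow> (\<Sum>x\<in>S. x) \<noteq> 0"

text \<open>Type of S \<subseteq> G \<times> H w.r.t. the enumeration hs of H (h_i = hs i, i < card H):
  the list (\<lambda>_0,...,\<lambda>_{t-1}) with \<lambda>_i = #{x \<in> S. snd x = h_i}.\<close>
definition has_type :: "(nat \<Rightarrow> 'h::finite) \<Rightarrow> ('g \<times> 'h) set \<Rightarrow> nat list \<Rightarrow> bool" where
  "has_type hs S lam \<longleftrightarrow> length lam = CARD('h) \<and>
     (\<forall>i<CARD('h). card {x\<in>S. snd x = hs i} = lam ! i)"

end

theory Submission
  imports Defs "HOL-Computational_Algebra.Polynomial"
begin

text \<open>A linear form \<open>v \<mapsto> \<Sum>\<^sub>i t\<^bsup>k i\<^esup> v\<^sub>i\<close> with \<open>k\<close> injective separates two points of \<open>\<int>\<^sup>n\<close>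
  unless \<open>t\<close> is a root of the nonzero polynomial \<open>\<Sum>\<^sub>i (a\<^sub>i - b\<^sub>i) X\<^bsup>k i\<^esup>\<close>, so for a finite set
  all but finitely many \<open>t\<close> give a form injective on it. Tensoring such a form with the identity
  of \<open>H\<close> is a homomorphism \<open>\<phi> : \<int>\<^sup>n \<times> H \<rightarrow> \<int> \<times> H\<close>; choosing it injective on \<open>T \<union> {0, \<Sum>T}\<close>,
  the image \<open>\<phi> T\<close> avoids \<open>0\<close>, has the same type and a nonzero sum, hence is sequenceable.
  Since \<open>\<Sum>\<phi> T \<noteq> 0\<close> its ordering is a genuine sequencing, and as \<open>\<phi>\<close> commutes with partial
  sums, distinct partial sums downstairs force distinct partial sums upstairs. The argument
  works for every \<open>n\<close>.\<close>

lemma coeff_sum_monom_inj: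
  assumes "finite I" "inj_on k I" "j \<in> I"
  shows "coeff (\<Sum>i\<in>I. monom (a i) (k i)) (k j) = a j"
proof -
  have "coeff (\<Sum>i\<in>I. monom (a i) (k i)) (k j) = (\<Sum>i\<in>I. if i = j then a i else 0)"
    using assms by (auto simp: coeff_sum coeff_monom inj_on_eq_iff intro!: sum.cong)
  also have "\<dots> = a j" using assms by simp
  finally show ?thesis .
qed

lemma exists_linear_form_inj_on:
  fixes A :: "('a::{idom, ring_char_0} ^ 'n::finite) set"
  assumes "finite A"
  shows "\<exists>c. inj_on (\<lambda>v. \<Sum>i\<in>UNIV. c i * v $ i) A"
proof -
  obtain k :: "'n \<Rightarrow> nat" where k: "inj k"
    using finite_imp_inj_to_nat_seg[of "UNIV :: 'n set"] by auto
  define p where "p d = (\<Sum>i\<in>UNIV. monom (d $ i) (k i))" for d :: "'a ^ 'n"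
  have p_nonzero: "p d \<noteq> 0" if "d \<noteq> 0" for d
  proof -
    obtain j where "d $ j \<noteq> 0" using \<open>d \<noteq> 0\<close> by (metis vec_eq_iff zero_index)
    then show ?thesis
      using coeff_sum_monom_inj[of UNIV k j "\<lambda>i. d $ i"] k by (auto simp: p_def)
  qed
  define D where "D = {a - b | a b. a \<in> A \<and> b \<in> A \<and> a \<noteq> b}"
  have "D \<subseteq> (\<lambda>(a, b). a - b) ` (A \<times> A)" by (auto simp: D_def)
  then have "finite D" using assms by (auto intro: finite_subset)
  moreover have "0 \<notin> D" by (auto simp: D_def)
  ultimately have "finite (\<Union>d\<in>D. {t. poly (p d) t = 0})"
    by (auto intro!: poly_roots_finite p_nonzero)
  then obtain t where t: "\<forall>d\<in>D. poly (p d) t \<noteq> 0"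
    using ex_new_if_finite[OF infinite_UNIV_char_0] by blast
  have poly_p: "poly (p d) t = (\<Sum>i\<in>UNIV. t ^ k i * d $ i)" for d
    by (simp add: p_def poly_sum poly_monom mult.commute)
  have "inj_on (\<lambda>v. \<Sum>i\<in>UNIV. t ^ k i * v $ i) A"
  proof (rule inj_onI, rule ccontr)
    fix a b assume "a \<in> A" "b \<in> A" "a \<noteq> b"
      and eq: "(\<Sum>i\<in>UNIV. t ^ k i * a $ i) = (\<Sum>i\<in>UNIV. t ^ k i * b $ i)"
    then have "a - b \<in> D" by (auto simp: D_def)
    moreover have "poly (p (a - b)) t = 0"
      using eq by (simp add: poly_p right_diff_distrib sum_subtractf)
    ultimately show False using t by blast
  qed
  then show ?thesis by (rule exI[where x = "\<lambda>i. t ^ k i"])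
qed

lemma (in additive) sum_list: "f (sum_list xs) = sum_list (map f xs)"
  by (induction xs) (simp_all add: zero add)

lemma (in additive) partial_sum_map: "partial_sum (map f xs) i = f (partial_sum xs i)"
  by (simp add: partial_sum_def sum_list take_map)

lemma (in additive) is_sequencing_of_map:
  assumes "is_sequencing (map f xs)"
  shows "is_sequencing xs"
  using assms unfolding is_sequencing_def by (auto simp: partial_sum_map inj_on_def)

lemma (in additive) nonzero_sum_image:
  assumes "finite T" "inj_on f (insert 0 (insert (\<Sum>x\<in>T. x) T))" "nonzero_sum T"
  shows "nonzero_sum (f ` T)"
proof -
  have "(\<Sum>y\<in>f ` T. y) = f (\<Sum>x\<in>T. x)"
    using assms(1,2) by (simp add: sum.reindex inj_on_subset[OF assms(2)] sum)
  also have "\<dots> \<noteq> f 0"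
    using assms(3) inj_on_eq_iff[OF assms(2), of "\<Sum>x\<in>T. x" 0] by (simp add: nonzero_sum_def)
  finally show ?thesis by (simp add: nonzero_sum_def zero)
qed

lemma sequencing_if_sequenceable_nonzero_sum:
  assumes "sequenceable S" "nonzero_sum S"
  obtains xs where "distinct xs" "set xs = S" "is_sequencing xs"
proof -
  obtain xs where xs: "distinct xs" "set xs = S" "is_sequencing xs \<or> is_rotational_sequencing xs"
    using assms(1) by (auto simp: sequenceable_def)
  have "partial_sum xs (length xs) = (\<Sum>x\<in>S. x)"
    using xs(1,2) sum_list_distinct_conv_sum_set[of xs "\<lambda>x. x"] by (simp add: partial_sum_def)
  then have "\<not> is_rotational_sequencing xs"
    using assms(2) by (simp add: is_rotational_sequencing_def nonzero_sum_def)
  then show ?thesis using xs that by blast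
qed

lemma (in additive) sequenceable_of_image:
  assumes "finite T" "inj_on f T" "nonzero_sum (f ` T)" "sequenceable (f ` T)"
  shows "sequenceable T"
proof -
  obtain ys where ys: "distinct ys" "set ys = f ` T" "is_sequencing ys"
    using sequencing_if_sequenceable_nonzero_sum assms(3,4) by blast
  define xs where "xs = map (the_inv_into T f) ys"
  have "map f xs = ys"
    using ys(2) assms(2) by (auto simp: xs_def f_the_inv_into_f intro!: map_idI)
  moreover have "set xs = T"
    using ys(2) assms(2) by (simp add: xs_def the_inv_into_onto)
  ultimately show ?thesis
    using assms(1) ys(1,3) is_sequencing_of_map
    by (auto simp: sequenceable_def distinct_map)
qed

lemma has_type_image_iff:
  assumes "inj_on f T" "\<And>x. x \<in> T \<Longrightarrow> snd (f x) = snd x"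
  shows "has_type hs (f ` T) lam \<longleftrightarrow> has_type hs T lam"
proof -
  have "card {y \<in> f ` T. snd y = h} = card {x \<in> T. snd x = h}" for h
  proof -
    have "{y \<in> f ` T. snd y = h} = f ` {x \<in> T. snd x = h}" using assms(2) by auto
    then show ?thesis by (simp add: card_image inj_on_subset[OF assms(1)])
  qed
  then show ?thesis by (simp add: has_type_def)
qed

theorem proposition4p3:
  fixes hs :: "nat \<Rightarrow> 'h::{ab_group_add, finite}"
    and lam :: "nat list"
  assumes enum: "bij_betw hs {..<CARD('h)} (UNIV :: 'h set)"
    and enum0: "hs 0 = 0"
    and hyp: "\<And>S :: (int \<times> 'h) set. finite S \<Longrightarrow> S \<subseteq> UNIV - {0} \<Longrightarrow>
                 nonzero_sum S \<Longrightarrow> has_type hs S lam \<Longrightarrow> sequenceable S"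
    and n2: "CARD('n::finite) \<ge> 2"
    and fin: "finite T"
    and sub: "T \<subseteq> (UNIV :: ((int ^ 'n) \<times> 'h) set) - {0}"
    and nz: "nonzero_sum T"
    and ty: "has_type hs T lam"
  shows "sequenceable T"
proof -
  define B where "B = insert 0 (insert (\<Sum>x\<in>T. x) T)"
  obtain c :: "'n \<Rightarrow> int" where c: "inj_on (\<lambda>v. \<Sum>i\<in>UNIV. c i * v $ i) (fst ` B)"
    using exists_linear_form_inj_on[of "fst ` B"] fin by (auto simp: B_def)
  define \<phi> where "\<phi> x = ((\<Sum>i\<in>UNIV. c i * fst x $ i), snd x)" for x :: "(int ^ 'n) \<times> 'h"
  interpret \<phi>: additive \<phi>
    by unfold_locales (simp add: \<phi>_def distrib_left sum.distrib)
  have inj_B: "inj_on \<phi> B"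
    using c by (auto simp: inj_on_def \<phi>_def prod_eq_iff)
  then have inj_T: "inj_on \<phi> T" by (rule inj_on_subset) (auto simp: B_def)
  have "0 \<notin> \<phi> ` T"
    using inj_B sub \<phi>.zero by (auto simp: B_def inj_on_eq_iff)
  moreover have "nonzero_sum (\<phi> ` T)"
    using \<phi>.nonzero_sum_image fin nz inj_B by (simp add: B_def)
  moreover have "has_type hs (\<phi> ` T) lam"
    using has_type_image_iff[OF inj_T] ty by (simp add: \<phi>_def)
  ultimately have "sequenceable (\<phi> ` T)" using hyp fin by blast
  then show ?thesis
    using \<phi>.sequenceable_of_image fin inj_T \<open>nonzero_sum (\<phi> ` T)\<close> by blast
qed

end
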